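(* Consider a chain of $N$ sites, each with a finite-dimensional local Hilbert space, and let $$H=\sum_{j=1}^{N-1}L_{j,j+1}^\dagger L_{j,j+1},$$ where each operator $L_{j,j+1}$ acts non-trivially only on sites $j$ and $j+1$. Suppose the ground-state manifold of $H$ is $G=\bigcap_{j}\ker(L_{j,j+1})\neq\{0\}$, spanned by linearly independent states $|\Psi_1\rangle,\ldots,|\Psi_n\rangle$. For each site $j$ let $M_j$ be an invertible operator acting non-trivially only on site $j$, let $M=\prod_j M_j$, and set $\tilde L_{j,j+1}=ML_{j,j+1}M^{-1}=M_jM_{j+1}L_{j,j+1}M_{j+1}^{-1}M_j^{-1}$. For each $j$ let $C_{j,j+1}=K_{j,j+1}^\dagger K_{j,j+1}$ be a positive definite operator (i.e. $\langle\Psi|C_{j,j+1}|\Psi\rangle>0$ for all $|\Psi\rangle\neq 0$) acting non-trivially only on sites $j,j+1$, and define $$\tilde H=\sum_{j=1}^{N-1}\tilde L_{j,j+1}^\dagger C_{j,j+1}\tilde L_{j,j+1}.$$ Then the ground-state manifold $\tilde G$ of $\tilde H$ is $\tilde G=\mathrm{Span}\{M|\Psi_1\rangle,\ldots,M|\Psi_n\rangle\}$ (it equals $\ker\tilde H=\bigcap_j\ker\tilde L_{j,j+1}$); in particular $H$ and $\tilde H$ have the same ground-state degeneracy.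
   Context: Operators acting non-trivially on certain sites are understood as tensored with identities on all other sites. $A^\dagger$ denotes the adjoint. The ground-state manifold of a positive semi-definite Hamiltonian with non-trivial kernel is its kernel (the eigenspace of eigenvalue $0$). *)

theory Defs
  imports "Jordan_Normal_Form.Schur_Decomposition" "Jordan_Normal_Form.VS_Connect" "Jordan_Normal_Form.Matrix_Kernel"
begin

text \<open>The total Hilbert space is C^D with D = prod of the d i; a basis index k < D
  encodes the configuration whose i-th local index is digit d i k (mixed radix).\<close>

definition tot_dim :: "(nat \<Rightarrow> nat) \<Rightarrow> nat \<Rightarrow> nat" where
  "tot_dim d N = (\<Prod>i<N. d i)"

definition digit :: "(nat \<Rightarrow> nat) \<Rightarrow> nat \<Rightarrow> nat \<Rightarrow> nat" where
  "digit d i k = (k div (\<Prod>l<i. d l)) mod d i"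

text \<open>A acts non-trivially only on the sites in S: A = a \<otimes> Id, i.e. its matrix
  elements vanish unless the configurations agree outside S, and then only
  depend on the local indices at the sites in S.\<close>
definition acts_on :: "(nat \<Rightarrow> nat) \<Rightarrow> nat \<Rightarrow> nat set \<Rightarrow> complex mat \<Rightarrow> bool" where
  "acts_on d N S A \<longleftrightarrow> A \<in> carrier_mat (tot_dim d N) (tot_dim d N) \<and>
     (\<exists>a :: (nat \<Rightarrow> nat) \<Rightarrow> (nat \<Rightarrow> nat) \<Rightarrow> complex.
        \<forall>k < tot_dim d N. \<forall>l < tot_dim d N.
          A $$ (k, l) =
            (if \<forall>i<N. i \<notin> S \<longrightarrow> digit d i k = digit d i l
             then a (\<lambda>i. if i \<in> S then digit d i k else 0)
                    (\<lambda>i. if i \<in> S then digit d i l else 0)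
             else 0))"

definition bond_sum :: "nat \<Rightarrow> nat \<Rightarrow> (nat \<Rightarrow> complex mat) \<Rightarrow> complex mat" where
  "bond_sum D N F = foldr (\<lambda>j acc. F j + acc) [0..<N-1] (0\<^sub>m D D)"

definition site_prod :: "nat \<Rightarrow> nat \<Rightarrow> (nat \<Rightarrow> complex mat) \<Rightarrow> complex mat" where
  "site_prod D N Ms = foldr (\<lambda>j acc. Ms j * acc) [0..<N] (1\<^sub>m D)"

definition site_prod_inv :: "nat \<Rightarrow> nat \<Rightarrow> (nat \<Rightarrow> complex mat) \<Rightarrow> complex mat" where
  "site_prod_inv D N Mi = foldr (\<lambda>j acc. acc * Mi j) [0..<N] (1\<^sub>m D)"

abbreviation cspan :: "nat \<Rightarrow> complex vec set \<Rightarrow> complex vec set" where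
  "cspan D S \<equiv> LinearCombinations.module.span class_ring (module_vec TYPE(complex) D) S"

abbreviation clin_indpt :: "nat \<Rightarrow> complex vec set \<Rightarrow> bool" where
  "clin_indpt D S \<equiv> LinearCombinations.module.lin_indpt class_ring (module_vec TYPE(complex) D) S"

end

theory Submission
  imports Defs
begin

text \<open>For positive definite C_j every summand of the deformed Hamiltonian has the quadratic
  form v \<mapsto> <C_j L'_j v, L'_j v>, which is nonnegative and vanishes only if L'_j v = 0; hence
  its kernel is the intersection of the kernels of the L'_j = M L_j M^-1. Since M is invertible,
  this intersection is M applied to the intersection of the kernels of the L_j, i.e. to the
  ground space G, and M maps the basis Psi_1, ..., Psi_n of G to a basis of M G.\<close>

lemma mult_mat_vec_zero_vec [simp]: "A \<in> carrier_mat m n \<Longrightarrow> A *\<^sub>v 0\<^sub>v n = 0\<^sub>v m"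
  by (intro eq_vecI) auto

lemma mat_adjoint_carrier_mat:
  "X \<in> carrier_mat m n \<Longrightarrow> mat_adjoint X \<in> carrier_mat n m"
  unfolding mat_adjoint_def by auto

lemma mat_adjoint_scalar_prod:
  fixes X :: "complex mat"
  assumes X: "X \<in> carrier_mat m n" and w: "w \<in> carrier_vec m" and v: "v \<in> carrier_vec n"
  shows "(mat_adjoint X *\<^sub>v w) \<bullet>c v = w \<bullet>c (X *\<^sub>v v)"
proof -
  have entry: "\<And>i k. i < n \<Longrightarrow> k < m \<Longrightarrow> mat_adjoint X $$ (i, k) = cnj (X $$ (k, i))"
    using X unfolding mat_adjoint_def by (auto simp: mat_of_rows_index)
  have "(mat_adjoint X *\<^sub>v w) \<bullet>c v = (\<Sum>i<n. (\<Sum>k<m. cnj (X $$ (k, i)) * w $ k) * cnj (v $ i))"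
    using mat_adjoint_carrier_mat[OF X] w v entry
    by (simp add: scalar_prod_def mult_mat_vec_def row_def lessThan_atLeast0)
  also have "\<dots> = (\<Sum>k<m. w $ k * cnj (\<Sum>i<n. X $$ (k, i) * v $ i))"
    by (simp add: sum_distrib_left sum_distrib_right mult_ac) (rule sum.swap)
  also have "\<dots> = w \<bullet>c (X *\<^sub>v v)"
    using X w v by (simp add: scalar_prod_def mult_mat_vec_def row_def lessThan_atLeast0)
  finally show ?thesis .
qed

lemma sandwich_carrier_mat:
  assumes "A \<in> carrier_mat m n" and "C \<in> carrier_mat m m"
  shows "mat_adjoint A * C * A \<in> carrier_mat n n"
  using assms mat_adjoint_carrier_mat by (meson mult_carrier_mat)

lemma sandwich_mult_mat_vec:
  assumes A: "A \<in> carrier_mat m n" and C: "C \<in> carrier_mat m m" and v: "v \<in> carrier_vec n"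
  shows "(mat_adjoint A * C * A) *\<^sub>v v = mat_adjoint A *\<^sub>v (C *\<^sub>v (A *\<^sub>v v))"
proof -
  have "(mat_adjoint A * C * A) *\<^sub>v v = (mat_adjoint A * C) *\<^sub>v (A *\<^sub>v v)"
    using mat_adjoint_carrier_mat[OF A] C A v by (meson assoc_mult_mat_vec mult_carrier_mat)
  also have "\<dots> = mat_adjoint A *\<^sub>v (C *\<^sub>v (A *\<^sub>v v))"
    using mat_adjoint_carrier_mat[OF A] C A v by (meson assoc_mult_mat_vec mult_mat_vec_carrier)
  finally show ?thesis .
qed

lemma sandwich_quadratic_form:
  fixes A C :: "complex mat"
  assumes A: "A \<in> carrier_mat m n" and C: "C \<in> carrier_mat m m" and v: "v \<in> carrier_vec n"
  shows "((mat_adjoint A * C * A) *\<^sub>v v) \<bullet>c v = (C *\<^sub>v (A *\<^sub>v v)) \<bullet>c (A *\<^sub>v v)"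
  using mat_adjoint_scalar_prod[OF A _ v, of "C *\<^sub>v (A *\<^sub>v v)"] A C v
  by (simp add: sandwich_mult_mat_vec)

lemma foldr_add_mat_carrier:
  assumes "\<And>j. j \<in> set js \<Longrightarrow> F j \<in> carrier_mat n n"
  shows "foldr (\<lambda>j acc. F j + acc) js (0\<^sub>m n n) \<in> carrier_mat n n"
  using assms by (induction js) auto

lemma foldr_add_mat_mult_vec_eq_zero:
  assumes "\<And>j. j \<in> set js \<Longrightarrow> F j \<in> carrier_mat n n \<and> F j *\<^sub>v v = 0\<^sub>v n"
    and v: "v \<in> carrier_vec n"
  shows "foldr (\<lambda>j acc. F j + acc) js (0\<^sub>m n n) *\<^sub>v v = 0\<^sub>v n"
  using assms
proof (induction js)
  case (Cons j js)
  then show ?case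
    using foldr_add_mat_carrier[of js F n] by (simp add: add_mult_distrib_mat_vec[of _ n n])
qed auto

lemma foldr_add_mat_quadratic_form:
  fixes F :: "nat \<Rightarrow> complex mat"
  assumes "\<And>j. j \<in> set js \<Longrightarrow> F j \<in> carrier_mat n n" and v: "v \<in> carrier_vec n"
  shows "(foldr (\<lambda>j acc. F j + acc) js (0\<^sub>m n n) *\<^sub>v v) \<bullet>c v = (\<Sum>j\<leftarrow>js. (F j *\<^sub>v v) \<bullet>c v)"
  using assms
proof (induction js)
  case Nil
  then show ?case by (simp add: mult_mat_vec_def scalar_prod_def)
next
  case (Cons j js)
  let ?S = "foldr (\<lambda>j acc. F j + acc) js (0\<^sub>m n n)"
  have "?S \<in> carrier_mat n n" "F j \<in> carrier_mat n n"
    using Cons.prems(1) foldr_add_mat_carrier[of js F n] by auto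
  then have "((F j + ?S) *\<^sub>v v) \<bullet>c v = (F j *\<^sub>v v) \<bullet>c v + (?S *\<^sub>v v) \<bullet>c v"
    using v by (simp add: add_mult_distrib_mat_vec) (intro add_scalar_prod_distrib[of _ n], auto)
  with Cons show ?case by simp
qed

lemma bond_sum_sandwich_carrier_mat:
  assumes A: "\<And>j. j < N - 1 \<Longrightarrow> A j \<in> carrier_mat m n"
    and C: "\<And>j. j < N - 1 \<Longrightarrow> C j \<in> carrier_mat m m"
  shows "bond_sum n N (\<lambda>j. mat_adjoint (A j) * C j * A j) \<in> carrier_mat n n"
  unfolding bond_sum_def using sandwich_carrier_mat[OF A C] by (intro foldr_add_mat_carrier) simp

lemma bond_sum_sandwich_quadratic_form:
  fixes A C :: "nat \<Rightarrow> complex mat"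
  assumes A: "\<And>j. j < N - 1 \<Longrightarrow> A j \<in> carrier_mat m n"
    and C: "\<And>j. j < N - 1 \<Longrightarrow> C j \<in> carrier_mat m m" and v: "v \<in> carrier_vec n"
  shows "(bond_sum n N (\<lambda>j. mat_adjoint (A j) * C j * A j) *\<^sub>v v) \<bullet>c v
       = (\<Sum>j<N - 1. (C j *\<^sub>v (A j *\<^sub>v v)) \<bullet>c (A j *\<^sub>v v))"
proof -
  have "(bond_sum n N (\<lambda>j. mat_adjoint (A j) * C j * A j) *\<^sub>v v) \<bullet>c v
      = (\<Sum>j\<leftarrow>[0..<N - 1]. ((mat_adjoint (A j) * C j * A j) *\<^sub>v v) \<bullet>c v)"
    unfolding bond_sum_def using sandwich_carrier_mat[OF A C] v
    by (intro foldr_add_mat_quadratic_form) simp_all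
  also have "\<dots> = (\<Sum>j<N - 1. (C j *\<^sub>v (A j *\<^sub>v v)) \<bullet>c (A j *\<^sub>v v))"
    unfolding interv_sum_list_conv_sum_set_nat set_upt atLeast0LessThan
    by (rule sum.cong) (simp_all add: sandwich_quadratic_form[OF A C v])
  finally show ?thesis .
qed

lemma mat_kernel_bond_sum_sandwich:
  fixes A C :: "nat \<Rightarrow> complex mat"
  assumes A: "\<And>j. j < N - 1 \<Longrightarrow> A j \<in> carrier_mat m n"
    and C: "\<And>j. j < N - 1 \<Longrightarrow> C j \<in> carrier_mat m m"
    and C_pos: "\<And>j w. j < N - 1 \<Longrightarrow> w \<in> carrier_vec m \<Longrightarrow> w \<noteq> 0\<^sub>v m \<Longrightarrow>
                  0 < Re ((C j *\<^sub>v w) \<bullet>c w)"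
  shows "mat_kernel (bond_sum n N (\<lambda>j. mat_adjoint (A j) * C j * A j))
       = {v \<in> carrier_vec n. \<forall>j < N - 1. A j *\<^sub>v v = 0\<^sub>v m}"
    (is "mat_kernel ?H = _")
proof -
  define q where "q v j = Re ((C j *\<^sub>v (A j *\<^sub>v v)) \<bullet>c (A j *\<^sub>v v))" for v j
  have Av: "A j *\<^sub>v v \<in> carrier_vec m" if "v \<in> carrier_vec n" "j < N - 1" for v j
    using A[OF that(2)] that(1) by simp
  have q_pos: "0 < q v j" if "v \<in> carrier_vec n" "j < N - 1" "A j *\<^sub>v v \<noteq> 0\<^sub>v m" for v j
    unfolding q_def using C_pos[OF that(2) Av[OF that(1,2)] that(3)] .
  have q_nonneg: "0 \<le> q v j" if "v \<in> carrier_vec n" "j < N - 1" for v j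
    using q_pos[OF that] C[OF that(2)] unfolding q_def by (cases "A j *\<^sub>v v = 0\<^sub>v m") auto
  have "\<forall>j < N - 1. A j *\<^sub>v v = 0\<^sub>v m" if v: "v \<in> carrier_vec n" and Hv: "?H *\<^sub>v v = 0\<^sub>v n" for v
  proof -
    have "(\<Sum>j<N - 1. q v j) = Re ((?H *\<^sub>v v) \<bullet>c v)"
      using bond_sum_sandwich_quadratic_form[OF A C v] unfolding q_def by simp
    also have "\<dots> = 0" using Hv v by simp
    finally have "q v j = 0" if "j < N - 1" for j
      using sum_nonneg_eq_0_iff[of "{..<N - 1}" "q v"] q_nonneg[OF v] that by auto
    then show ?thesis using q_pos[OF v] by fastforce
  qed
  moreover have "?H *\<^sub>v v = 0\<^sub>v n" if v: "v \<in> carrier_vec n" and "\<forall>j < N - 1. A j *\<^sub>v v = 0\<^sub>v m" for v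
    unfolding bond_sum_def
  proof (rule foldr_add_mat_mult_vec_eq_zero[OF _ v])
    fix j assume "j \<in> set [0..<N - 1]"
    then have j: "j < N - 1" by simp
    then show "mat_adjoint (A j) * C j * A j \<in> carrier_mat n n
        \<and> (mat_adjoint (A j) * C j * A j) *\<^sub>v v = 0\<^sub>v n"
      using that(2) mat_adjoint_carrier_mat[OF A[OF j]] C[OF j]
      by (simp add: sandwich_carrier_mat[OF A C] sandwich_mult_mat_vec[OF A[OF j] C[OF j] v])
  qed
  moreover have "?H \<in> carrier_mat n n" by (rule bond_sum_sandwich_carrier_mat[OF A C])
  ultimately show ?thesis by (auto simp: mat_kernel)
qed

lemma site_prod_inverse:
  assumes Ms: "\<And>j. j < N \<Longrightarrow> Ms j \<in> carrier_mat n n"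
    and Mi: "\<And>j. j < N \<Longrightarrow> Mi j \<in> carrier_mat n n"
    and inv: "\<And>j. j < N \<Longrightarrow> Ms j * Mi j = 1\<^sub>m n \<and> Mi j * Ms j = 1\<^sub>m n"
  shows "site_prod n N Ms \<in> carrier_mat n n" "site_prod_inv n N Mi \<in> carrier_mat n n"
    "site_prod n N Ms * site_prod_inv n N Mi = 1\<^sub>m n"
    "site_prod_inv n N Mi * site_prod n N Ms = 1\<^sub>m n"
proof -
  have "foldr (\<lambda>j acc. Ms j * acc) js (1\<^sub>m n) \<in> carrier_mat n n
    \<and> foldr (\<lambda>j acc. acc * Mi j) js (1\<^sub>m n) \<in> carrier_mat n n
    \<and> foldr (\<lambda>j acc. Ms j * acc) js (1\<^sub>m n) * foldr (\<lambda>j acc. acc * Mi j) js (1\<^sub>m n) = 1\<^sub>m n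
    \<and> foldr (\<lambda>j acc. acc * Mi j) js (1\<^sub>m n) * foldr (\<lambda>j acc. Ms j * acc) js (1\<^sub>m n) = 1\<^sub>m n"
    if "\<forall>j \<in> set js. j < N" for js
    using that
  proof (induction js)
    case (Cons j js)
    define P where "P = foldr (\<lambda>j acc. Ms j * acc) js (1\<^sub>m n)"
    define Q where "Q = foldr (\<lambda>j acc. acc * Mi j) js (1\<^sub>m n)"
    from Cons have P: "P \<in> carrier_mat n n" and Q: "Q \<in> carrier_mat n n"
      and PQ: "P * Q = 1\<^sub>m n" and QP: "Q * P = 1\<^sub>m n"
      unfolding P_def Q_def by auto
    from Cons.prems have j: "j < N" by simp
    have "(Ms j * P) * (Q * Mi j) = Ms j * (P * Q) * Mi j"
      using Ms[OF j] Mi[OF j] P Q by (simp add: assoc_mult_mat[of _ n n _ n _ n])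
    also have "\<dots> = 1\<^sub>m n" using PQ inv[OF j] Ms[OF j] by simp
    finally have left: "(Ms j * P) * (Q * Mi j) = 1\<^sub>m n" .
    have "(Q * Mi j) * (Ms j * P) = Q * (Mi j * Ms j) * P"
      using Ms[OF j] Mi[OF j] P Q by (simp add: assoc_mult_mat[of _ n n _ n _ n])
    also have "\<dots> = 1\<^sub>m n" using QP inv[OF j] Q by simp
    finally have right: "(Q * Mi j) * (Ms j * P) = 1\<^sub>m n" .
    show ?case
      using left right P Q Ms[OF j] Mi[OF j] unfolding P_def Q_def by simp
  qed simp
  from this[of "[0..<N]"] show
      "site_prod n N Ms \<in> carrier_mat n n" "site_prod_inv n N Mi \<in> carrier_mat n n"
      "site_prod n N Ms * site_prod_inv n N Mi = 1\<^sub>m n"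
      "site_prod_inv n N Mi * site_prod n N Ms = 1\<^sub>m n"
    unfolding site_prod_def site_prod_inv_def by auto
qed

lemma inj_on_mult_mat_vec:
  fixes A B :: "'a :: semiring_1 mat"
  assumes A: "A \<in> carrier_mat n n" and B: "B \<in> carrier_mat n n" and BA: "B * A = 1\<^sub>m n"
  shows "inj_on (\<lambda>v. A *\<^sub>v v) (carrier_vec n)"
proof (rule inj_on_inverseI)
  show "B *\<^sub>v (A *\<^sub>v v) = v" if "v \<in> carrier_vec n" for v
    using that A B BA by (auto simp flip: assoc_mult_mat_vec)
qed

lemma mult_mat_vec_conj_eq_zero_iff:
  fixes A B L :: "'a :: semiring_1 mat"
  assumes A: "A \<in> carrier_mat n n" and B: "B \<in> carrier_mat n n" and BA: "B * A = 1\<^sub>m n"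
    and L: "L \<in> carrier_mat n n" and v: "v \<in> carrier_vec n"
  shows "(A * L * B) *\<^sub>v v = 0\<^sub>v n \<longleftrightarrow> L *\<^sub>v (B *\<^sub>v v) = 0\<^sub>v n"
proof -
  have "(A * L * B) *\<^sub>v v = A *\<^sub>v (L *\<^sub>v (B *\<^sub>v v))"
    using A L B v by (simp add: assoc_mult_mat_vec[of _ n n _ n])
  moreover have "A *\<^sub>v (L *\<^sub>v (B *\<^sub>v v)) = A *\<^sub>v 0\<^sub>v n \<longleftrightarrow> L *\<^sub>v (B *\<^sub>v v) = 0\<^sub>v n"
    using inj_on_mult_mat_vec[OF A B BA] L B v by (simp add: inj_on_eq_iff)
  ultimately show ?thesis using A by simp
qed

context vec_space
begin

lemma mult_mat_vec_preimage_submodule: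
  assumes B: "B \<in> carrier_mat n n" and W: "submodule class_ring W V"
  shows "submodule class_ring {v \<in> carrier_vec n. B *\<^sub>v v \<in> W} V"
proof -
  interpret W: submodule class_ring W V by (rule W)
  show ?thesis
    by unfold_locales
      (use B W.m_closed W.zero_closed W.smult_closed in
        \<open>auto simp: mult_add_distrib_mat_vec mult_mat_vec\<close>)
qed

lemma span_mult_mat_vec_image:
  assumes A: "A \<in> carrier_mat n n" and B: "B \<in> carrier_mat n n"
    and BA: "B * A = 1\<^sub>m n" and AB: "A * B = 1\<^sub>m n" and S: "S \<subseteq> carrier_vec n"
  shows "span ((\<lambda>v. A *\<^sub>v v) ` S) = {v \<in> carrier_vec n. B *\<^sub>v v \<in> span S}"
proof
  have AS: "(\<lambda>v. A *\<^sub>v v) ` S \<subseteq> carrier_vec n" using A S by auto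
  show "span ((\<lambda>v. A *\<^sub>v v) ` S) \<subseteq> {v \<in> carrier_vec n. B *\<^sub>v v \<in> span S}"
  proof (rule span_is_subset)
    show "submodule class_ring {v \<in> carrier_vec n. B *\<^sub>v v \<in> span S} V"
      using B S by (intro mult_mat_vec_preimage_submodule span_is_submodule) auto
    have "B *\<^sub>v (A *\<^sub>v s) = s" if "s \<in> S" for s
      using that A B BA S by (auto simp flip: assoc_mult_mat_vec)
    then show "(\<lambda>v. A *\<^sub>v v) ` S \<subseteq> {v \<in> carrier_vec n. B *\<^sub>v v \<in> span S}"
      using A S in_own_span[OF S] by auto
  qed
  show "{v \<in> carrier_vec n. B *\<^sub>v v \<in> span S} \<subseteq> span ((\<lambda>v. A *\<^sub>v v) ` S)"
  proof
    fix v assume v: "v \<in> {v \<in> carrier_vec n. B *\<^sub>v v \<in> span S}"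
    have "span S \<subseteq> {w \<in> carrier_vec n. A *\<^sub>v w \<in> span ((\<lambda>v. A *\<^sub>v v) ` S)}"
    proof (rule span_is_subset)
      show "submodule class_ring {w \<in> carrier_vec n. A *\<^sub>v w \<in> span ((\<lambda>v. A *\<^sub>v v) ` S)} V"
        using A AS by (intro mult_mat_vec_preimage_submodule span_is_submodule) auto
      show "S \<subseteq> {w \<in> carrier_vec n. A *\<^sub>v w \<in> span ((\<lambda>v. A *\<^sub>v v) ` S)}"
        using S in_own_span[OF AS] by auto
    qed
    then have "A *\<^sub>v (B *\<^sub>v v) \<in> span ((\<lambda>v. A *\<^sub>v v) ` S)" using v by auto
    moreover have "A *\<^sub>v (B *\<^sub>v v) = v" using v A B AB by (auto simp flip: assoc_mult_mat_vec)
    ultimately show "v \<in> span ((\<lambda>v. A *\<^sub>v v) ` S)" by simp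
  qed
qed

lemma mult_mat_vec_linear_map:
  assumes A: "A \<in> carrier_mat n n"
  shows "linear_map class_ring V V (\<lambda>v. A *\<^sub>v v)"
proof -
  have "(\<lambda>v. A *\<^sub>v v) \<in> LinearCombinations.module_hom class_ring V V"
    unfolding LinearCombinations.module_hom_def
    using A by (auto simp: mult_add_distrib_mat_vec mult_mat_vec)
  then show ?thesis
    unfolding linear_map_def mod_hom_def mod_hom_axioms_def using vec_vs vec_module by auto
qed

lemma lin_indpt_mult_mat_vec_image:
  assumes A: "A \<in> carrier_mat n n" and B: "B \<in> carrier_mat n n" and BA: "B * A = 1\<^sub>m n"
    and S: "S \<subseteq> carrier_vec n" and fin: "finite S" and li: "lin_indpt S"
  shows "lin_indpt ((\<lambda>v. A *\<^sub>v v) ` S)"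
proof -
  interpret T: linear_map class_ring V V "\<lambda>v. A *\<^sub>v v" by (rule mult_mat_vec_linear_map[OF A])
  have inj: "inj_on (\<lambda>v. A *\<^sub>v v) (carrier V)" using inj_on_mult_mat_vec[OF A B BA] by simp
  show ?thesis
  proof (rule finite_lin_indpt2)
    show "finite ((\<lambda>v. A *\<^sub>v v) ` S)" using fin by simp
    show "(\<lambda>v. A *\<^sub>v v) ` S \<subseteq> carrier_vec n" using A S by auto
    fix a assume lc: "lincomb a ((\<lambda>v. A *\<^sub>v v) ` S) = 0\<^sub>v n"
    let ?w = "lincomb (a \<circ> (\<lambda>v. A *\<^sub>v v)) S"
    have w: "?w \<in> carrier_vec n" using S by (intro lincomb_closed[simplified]) auto
    have "A *\<^sub>v ?w = 0\<^sub>v n"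
      using T.lincomb_linear_image[OF inj, of S a] S fin lc by auto
    then have "?w = 0\<^sub>v n"
      using inj_onD[OF inj_on_mult_mat_vec[OF A B BA], of ?w "0\<^sub>v n"] w A by simp
    then have "a \<circ> (\<lambda>v. A *\<^sub>v v) \<in> S \<rightarrow> {0}"
      using li fin not_lindepD[of S S "a \<circ> (\<lambda>v. A *\<^sub>v v)"] by auto
    then show "\<forall>v\<in>(\<lambda>v. A *\<^sub>v v) ` S. a v = 0" by auto
  qed
qed

end

theorem theorem1:
  fixes N n :: nat and d :: "nat \<Rightarrow> nat"
    and L K C Ms Mi :: "nat \<Rightarrow> complex mat"
    and Psi :: "nat \<Rightarrow> complex vec"
  defines "D \<equiv> tot_dim d N"
  defines "H \<equiv> bond_sum D N (\<lambda>j. mat_adjoint (L j) * L j)"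
  defines "M \<equiv> site_prod D N Ms"
  defines "Minv \<equiv> site_prod_inv D N Mi"
  defines "Lt \<equiv> (\<lambda>j. M * L j * Minv)"
  defines "Ht \<equiv> bond_sum D N (\<lambda>j. mat_adjoint (Lt j) * C j * Lt j)"
  assumes dpos: "\<And>i. i < N \<Longrightarrow> 0 < d i"
    and L_loc: "\<And>j. j < N - 1 \<Longrightarrow> acts_on d N {j, Suc j} (L j)"
    and M_loc: "\<And>j. j < N \<Longrightarrow> acts_on d N {j} (Ms j)"
    and Mi_loc: "\<And>j. j < N \<Longrightarrow> acts_on d N {j} (Mi j)"
    and M_inv: "\<And>j. j < N \<Longrightarrow> Ms j * Mi j = 1\<^sub>m D \<and> Mi j * Ms j = 1\<^sub>m D"
    and C_loc: "\<And>j. j < N - 1 \<Longrightarrow> acts_on d N {j, Suc j} (C j)"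
    and K_dim: "\<And>j. j < N - 1 \<Longrightarrow> K j \<in> carrier_mat D D"
    and C_KK: "\<And>j. j < N - 1 \<Longrightarrow> C j = mat_adjoint (K j) * K j"
    and C_pd: "\<And>j v. j < N - 1 \<Longrightarrow> v \<in> carrier_vec D \<Longrightarrow> v \<noteq> 0\<^sub>v D \<Longrightarrow>
                 Im ((C j *\<^sub>v v) \<bullet>c v) = 0 \<and> 0 < Re ((C j *\<^sub>v v) \<bullet>c v)"
    and G_def: "mat_kernel H = {v \<in> carrier_vec D. \<forall>j < N - 1. L j *\<^sub>v v = 0\<^sub>v D}"
    and n_pos: "0 < n"
    and Psi_dim: "\<And>i. i < n \<Longrightarrow> Psi i \<in> carrier_vec D"
    and Psi_inj: "inj_on Psi {..<n}"
    and Psi_li: "clin_indpt D (Psi ` {..<n})"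
    and G_span: "mat_kernel H = cspan D (Psi ` {..<n})"
  shows "mat_kernel Ht = cspan D ((\<lambda>i. M *\<^sub>v Psi i) ` {..<n})
       \<and> mat_kernel Ht = {v \<in> carrier_vec D. \<forall>j < N - 1. Lt j *\<^sub>v v = 0\<^sub>v D}
       \<and> inj_on (\<lambda>i. M *\<^sub>v Psi i) {..<n}
       \<and> clin_indpt D ((\<lambda>i. M *\<^sub>v Psi i) ` {..<n})"
proof -
  have Ms: "Ms j \<in> carrier_mat D D" and Mi: "Mi j \<in> carrier_mat D D" if "j < N" for j
    using M_loc[OF that] Mi_loc[OF that] unfolding acts_on_def D_def by auto
  have L: "L j \<in> carrier_mat D D" and C: "C j \<in> carrier_mat D D" if "j < N - 1" for j
    using L_loc[OF that] C_loc[OF that] unfolding acts_on_def D_def by auto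
  have M: "M \<in> carrier_mat D D" and Minv: "Minv \<in> carrier_mat D D"
    and M_Minv: "M * Minv = 1\<^sub>m D" and Minv_M: "Minv * M = 1\<^sub>m D"
    using site_prod_inverse[OF Ms Mi M_inv] unfolding M_def Minv_def by auto
  have Lt: "Lt j \<in> carrier_mat D D" if "j < N - 1" for j
    unfolding Lt_def using M Minv L[OF that] by simp
  have Psi_carrier: "Psi ` {..<n} \<subseteq> carrier_vec D" using Psi_dim by auto
  have C_pos: "0 < Re ((C j *\<^sub>v w) \<bullet>c w)" if "j < N - 1" "w \<in> carrier_vec D" "w \<noteq> 0\<^sub>v D" for j w
    using C_pd[OF that] by simp
  have kernel_Ht: "mat_kernel Ht = {v \<in> carrier_vec D. \<forall>j < N - 1. Lt j *\<^sub>v v = 0\<^sub>v D}"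
    unfolding Ht_def by (rule mat_kernel_bond_sum_sandwich[OF Lt C C_pos])
  also have "\<dots> = {v \<in> carrier_vec D. Minv *\<^sub>v v \<in> mat_kernel H}"
    unfolding G_def Lt_def using mult_mat_vec_conj_eq_zero_iff[OF M Minv Minv_M L] Minv by auto
  also have "\<dots> = cspan D ((\<lambda>v. M *\<^sub>v v) ` Psi ` {..<n})"
    unfolding G_span
    by (rule vec_space.span_mult_mat_vec_image[OF M Minv Minv_M M_Minv Psi_carrier, symmetric])
  finally have span: "mat_kernel Ht = cspan D ((\<lambda>i. M *\<^sub>v Psi i) ` {..<n})"
    by (simp add: image_image)
  have "inj_on (\<lambda>v. M *\<^sub>v v) (Psi ` {..<n})"
    using inj_on_mult_mat_vec[OF M Minv Minv_M] Psi_carrier by (rule inj_on_subset)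
  then have inj: "inj_on (\<lambda>i. M *\<^sub>v Psi i) {..<n}"
    using Psi_inj comp_inj_on[of Psi "{..<n}" "\<lambda>v. M *\<^sub>v v"] by (simp add: comp_def)
  have "clin_indpt D ((\<lambda>v. M *\<^sub>v v) ` Psi ` {..<n})"
    using vec_space.lin_indpt_mult_mat_vec_image[OF M Minv Minv_M Psi_carrier _ Psi_li] by simp
  then show ?thesis using span kernel_Ht inj by (simp add: image_image)
qed

end
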